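(* (i) For every $\varepsilon>0$ there is a sequence of instances $(\mathcal{T}_n,w_n)$ (finite trees with weight functions $w_n:V(\mathcal{T}_n)\to\mathbb{R}_{\ge0}$) with $w_n(\mathcal{T}_n)=1$ and $\lim_{n\to\infty}\mathtt{OPT}(\mathcal{T}_n,w_n)=\infty$, such that every centroid tree $C_n$ of $(\mathcal{T}_n,w_n)$ satisfies $$\mathtt{cost}_{w_n}(C_n)\ge 2\cdot\mathtt{OPT}(\mathcal{T}_n,w_n)-1-\varepsilon.$$ (ii) There is a sequence of instances $(\mathcal{T}_n,w_n)$, where $w_n$ is the uniform probability distribution on $V(\mathcal{T}_n)$, with $\lim_{n\to\infty}\mathtt{OPT}(\mathcal{T}_n,w_n)=\infty$, such that for every choice of centroid trees $C_n$ of $(\mathcal{T}_n,w_n)$, $$\lim_{n\to\infty}\frac{\mathtt{cost}_{w_n}(C_n)}{\mathtt{OPT}(\mathcal{T}_n,w_n)}=2.$$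
   Context: For a subgraph $\mathcal{H}$ of $\mathcal{T}$, $w(\mathcal{H})=\sum_{x\in V(\mathcal{H})}w(x)$. A search tree on a tree $\mathcal{T}$ is a rooted tree $T$ with vertex set $V(\mathcal{T})$ defined recursively: its root is an arbitrary vertex $r$, and the children of $r$ are the roots of search trees built on the connected components of $\mathcal{T}-r$; a single-vertex tree has only itself as search tree. $\mathtt{cost}_w(T)=\sum_x w(x)\,\mathtt{depth}_T(x)$ with root depth $1$; $\mathtt{OPT}(\mathcal{T},w)$ is the minimum cost over all search trees on $\mathcal{T}$. A vertex $v$ is a centroid of $(\mathcal{T},w)$ if each component $\mathcal{H}$ of $\mathcal{T}-v$ has $w(\mathcal{H})\le w(\mathcal{T})/2$. A search tree $T$ is a centroid tree if each vertex $x$ is a centroid of $(\mathcal{T}[V(T_x)],w)$, $T_x$ being the subtree of $T$ rooted at $x$. *)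

theory Defs
  imports Complex_Main
begin

text \<open>Undirected graphs: vertex set V and a symmetric, irreflexive edge relation E
  (each undirected edge is stored as both ordered pairs).\<close>

definition is_tree :: "'a set \<Rightarrow> ('a \<times> 'a) set \<Rightarrow> bool" where
  "is_tree V E \<longleftrightarrow> finite V \<and> V \<noteq> {} \<and> E \<subseteq> V \<times> V \<and> sym E \<and> irrefl E
     \<and> (\<forall>x\<in>V. \<forall>y\<in>V. (x, y) \<in> E\<^sup>*)
     \<and> card E = 2 * (card V - 1)"

definition components :: "('a \<times> 'a) set \<Rightarrow> 'a set \<Rightarrow> 'a set set" where
  "components E X = {{y \<in> X. (x, y) \<in> (E \<inter> (X \<times> X))\<^sup>*} | x. x \<in> X}"

datatype 'a rtree = Node 'a "'a rtree list"

fun root :: "'a rtree \<Rightarrow> 'a" where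
  "root (Node r ts) = r"

fun vset :: "'a rtree \<Rightarrow> 'a set" where
  "vset (Node r ts) = insert r (\<Union>t\<in>set ts. vset t)"

fun subtrees :: "'a rtree \<Rightarrow> 'a rtree set" where
  "subtrees (Node r ts) = insert (Node r ts) (\<Union>t\<in>set ts. subtrees t)"

inductive search_tree :: "('a \<times> 'a) set \<Rightarrow> 'a set \<Rightarrow> 'a rtree \<Rightarrow> bool" where
  "r \<in> S \<Longrightarrow> distinct (map vset ts) \<Longrightarrow> set (map vset ts) = components E (S - {r})
   \<Longrightarrow> (\<forall>t\<in>set ts. search_tree E (vset t) t) \<Longrightarrow> search_tree E S (Node r ts)"

fun cost_at :: "('a \<Rightarrow> real) \<Rightarrow> nat \<Rightarrow> 'a rtree \<Rightarrow> real" where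
  "cost_at w d (Node r ts) = real d * w r + sum_list (map (cost_at w (Suc d)) ts)"

definition cost :: "('a \<Rightarrow> real) \<Rightarrow> 'a rtree \<Rightarrow> real" where
  "cost w T = cost_at w 1 T"

definition OPT :: "'a set \<Rightarrow> ('a \<times> 'a) set \<Rightarrow> ('a \<Rightarrow> real) \<Rightarrow> real" where
  "OPT V E w = Inf {cost w T | T. search_tree E V T}"

definition is_centroid :: "('a \<times> 'a) set \<Rightarrow> 'a set \<Rightarrow> ('a \<Rightarrow> real) \<Rightarrow> 'a \<Rightarrow> bool" where
  "is_centroid E S w v \<longleftrightarrow> v \<in> S \<and> (\<forall>H \<in> components E (S - {v}). sum w H \<le> sum w S / 2)"

definition centroid_tree :: "'a set \<Rightarrow> ('a \<times> 'a) set \<Rightarrow> ('a \<Rightarrow> real) \<Rightarrow> 'a rtree \<Rightarrow> bool" where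
  "centroid_tree V E w T \<longleftrightarrow> search_tree E V T
     \<and> (\<forall>s\<in>subtrees T. is_centroid E (vset s) w (root s))"

end

theory Submission
  imports Defs
begin

text \<open>Upper bound: let \<open>\<phi>\<^sub>T(H)\<close> be the cost of the search tree that \<open>T\<close> induces on a vertex set \<open>H\<close>.
  If \<open>H\<close> is connected with centroid \<open>c\<close>, its vertex \<open>r\<close> that lies highest in \<open>T\<close> is an ancestor of all
  of \<open>H\<close>, and \<open>r\<close> lies in at most one component of \<open>H - c\<close>, which weighs at most \<open>w(H) / 2\<close>. Counting
  \<open>r\<close> as an extra ancestor of the vertices outside that component gives
  \<open>2 \<phi>\<^sub>T(H) \<ge> 2 \<Sum>\<^sub>i \<phi>\<^sub>T(H\<^sub>i) + w(H) + w(c)\<close> over the components \<open>H\<^sub>i\<close>, and induction over a centroid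
  tree \<open>C\<close> yields \<open>cost C \<le> 2 cost T - w(V)\<close>, i.e. \<open>cost C + 1 \<le> 2 OPT\<close> for normalised weights.

  Lower bound: level \<open>k + 1\<close> of the instances consists of two copies of level \<open>k\<close> whose distinguished
  vertices are joined through a new vertex of weight \<open>\<delta>\<close>. The new vertex is the only centroid, so all
  centroid trees cost \<open>c\<^sub>k\<close> with \<open>c\<^sub>k\<^sub>+\<^sub>1 = W\<^sub>k\<^sub>+\<^sub>1 + 2 c\<^sub>k\<close>, while rooting at the distinguished
  vertex of the first copy gives search trees of cost \<open>t\<^sub>k\<^sub>+\<^sub>1 = 2 t\<^sub>k + W\<^sub>k + 3 \<delta>\<close>. Since
  \<open>2 t\<^sub>k - W\<^sub>k - c\<^sub>k = 4 \<delta> (2\<^sup>k - 1)\<close>, normalising the weights gives \<open>cost C \<ge> 2 OPT - 1 - 4 \<delta>\<close>,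
  and \<open>c\<^sub>k / W\<^sub>k\<close> grows linearly in \<open>k\<close>. For \<open>\<delta> = 1\<close> the weights are uniform and \<open>OPT\<close> is squeezed
  between \<open>(cost C + 1) / 2\<close> and \<open>(cost C + 3) / 2\<close>.\<close>

section \<open>Connected components\<close>

definition connected_in :: "('a \<times> 'a) set \<Rightarrow> 'a set \<Rightarrow> bool" where
  "connected_in E H \<longleftrightarrow> (\<forall>a\<in>H. \<forall>b\<in>H. (a, b) \<in> (E \<inter> H \<times> H)\<^sup>*)"

lemma components_iff:
  "K \<in> components E X \<longleftrightarrow> (\<exists>x\<in>X. K = {y \<in> X. (x, y) \<in> (E \<inter> X \<times> X)\<^sup>*})"
  by (auto simp: components_def)

lemma components_subset: "K \<in> components E X \<Longrightarrow> K \<subseteq> X"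
  by (auto simp: components_def)

lemma Union_components: "\<Union>(components E X) = X"
  by (auto simp: components_def)

lemma components_empty [simp]: "components E {} = {}"
  by (simp add: components_def)

lemma components_cong: "E \<inter> X \<times> X = E' \<inter> X \<times> X \<Longrightarrow> components E X = components E' X"
  by (simp add: components_def)

lemma sym_Int_Times: "sym E \<Longrightarrow> sym (E \<inter> X \<times> X)"
  by (auto simp: sym_def)

lemma rtrancl_sym_commute: "sym R \<Longrightarrow> (a, b) \<in> R\<^sup>* \<Longrightarrow> (b, a) \<in> R\<^sup>*"
  by (metis converse_iff rtrancl_converseI sym_conv_converse_eq)

lemma connected_inI:
  assumes "sym E" "\<forall>x\<in>X. (d, x) \<in> (E \<inter> X \<times> X)\<^sup>*"
  shows "connected_in E X"
  unfolding connected_in_def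
proof (intro ballI)
  fix a b assume "a \<in> X" "b \<in> X"
  then have "(d, a) \<in> (E \<inter> X \<times> X)\<^sup>*" "(d, b) \<in> (E \<inter> X \<times> X)\<^sup>*" using assms(2) by auto
  then show "(a, b) \<in> (E \<inter> X \<times> X)\<^sup>*"
    using rtrancl_sym_commute[OF sym_Int_Times[OF assms(1)]] by (meson rtrancl_trans)
qed

lemma connected_in_singleton: "connected_in E {c}"
  unfolding connected_in_def by auto

lemma connected_in_mono:
  assumes "connected_in E X" "E \<inter> X \<times> X \<subseteq> E'"
  shows "connected_in E' X"
  unfolding connected_in_def
proof (intro ballI)
  fix a b assume "a \<in> X" "b \<in> X"
  then have "(a, b) \<in> (E \<inter> X \<times> X)\<^sup>*" using assms(1) by (auto simp: connected_in_def)
  moreover have "E \<inter> X \<times> X \<subseteq> E' \<inter> X \<times> X" using assms(2) by blast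
  ultimately show "(a, b) \<in> (E' \<inter> X \<times> X)\<^sup>*" using rtrancl_mono by blast
qed

lemma connected_in_Un:
  assumes "sym E" "connected_in E X" "connected_in E Y" "x \<in> X" "y \<in> Y" "(x, y) \<in> E"
  shows "connected_in E (X \<union> Y)"
proof (rule connected_inI[OF assms(1), of _ x], intro ballI)
  let ?R = "E \<inter> (X \<union> Y) \<times> (X \<union> Y)"
  fix z assume z: "z \<in> X \<union> Y"
  have RX: "(E \<inter> X \<times> X)\<^sup>* \<subseteq> ?R\<^sup>*" and RY: "(E \<inter> Y \<times> Y)\<^sup>* \<subseteq> ?R\<^sup>*"
    by (auto intro!: rtrancl_mono)
  show "(x, z) \<in> ?R\<^sup>*"
  proof (cases "z \<in> X")
    case True
    then show ?thesis using assms(2,4) RX unfolding connected_in_def by blast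
  next
    case False
    then have "(y, z) \<in> ?R\<^sup>*" using z assms(3,5) RY unfolding connected_in_def by blast
    moreover have "(x, y) \<in> ?R" using assms(4-6) by blast
    ultimately show ?thesis by (rule converse_rtrancl_into_rtrancl[rotated])
  qed
qed

lemma components_disjoint:
  assumes "sym E" "K1 \<in> components E X" "K2 \<in> components E X" "K1 \<noteq> K2"
  shows "K1 \<inter> K2 = {}"
proof (rule ccontr)
  let ?R = "E \<inter> X \<times> X"
  assume "K1 \<inter> K2 \<noteq> {}"
  then obtain z where z: "z \<in> K1" "z \<in> K2" by blast
  obtain x where x: "x \<in> X" "K1 = {y \<in> X. (x, y) \<in> ?R\<^sup>*}" using assms(2) by (auto simp: components_iff)
  obtain y where y: "y \<in> X" "K2 = {v \<in> X. (y, v) \<in> ?R\<^sup>*}" using assms(3) by (auto simp: components_iff)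
  have "(x, z) \<in> ?R\<^sup>*" "(y, z) \<in> ?R\<^sup>*" using z x y by auto
  then have "(x, y) \<in> ?R\<^sup>*" "(y, x) \<in> ?R\<^sup>*"
    using rtrancl_sym_commute[OF sym_Int_Times[OF assms(1)]] by (meson rtrancl_trans)+
  then have "K1 = K2" unfolding x y by (auto intro: rtrancl_trans)
  with assms(4) show False by simp
qed

lemma connected_in_component:
  assumes "sym E" "K \<in> components E X"
  shows "connected_in E K"
proof -
  let ?R = "E \<inter> X \<times> X"
  obtain x where x: "x \<in> X" "K = {y \<in> X. (x, y) \<in> ?R\<^sup>*}"
    using assms(2) by (auto simp: components_iff)
  have "(x, y) \<in> (E \<inter> K \<times> K)\<^sup>*" if "(x, y) \<in> ?R\<^sup>*" for y
    using that
  proof (induction rule: rtrancl_induct)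
    case (step y z)
    have "(x, z) \<in> ?R\<^sup>*" using step(1,2) by (rule rtrancl.rtrancl_into_rtrancl)
    then have "(y, z) \<in> E \<inter> K \<times> K" using step(1,2) x(2) by blast
    with step(3) show ?case by (rule rtrancl.rtrancl_into_rtrancl)
  qed simp
  then show ?thesis using x(2) by (intro connected_inI[OF assms(1), of _ x]) blast
qed

lemma components_of_connected:
  assumes "connected_in E X" "X \<noteq> {}"
  shows "components E X = {X}"
  using assms unfolding components_def connected_in_def by auto

lemma connected_in_iff_rtrancl:
  "E \<subseteq> S \<times> S \<Longrightarrow> connected_in E S \<longleftrightarrow> (\<forall>x\<in>S. \<forall>y\<in>S. (x, y) \<in> E\<^sup>*)"
proof -
  assume "E \<subseteq> S \<times> S"
  then have "E \<inter> S \<times> S = E" by blast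
  then show ?thesis unfolding connected_in_def by simp
qed

lemma component_containing_connected:
  assumes "connected_in E Y" "Y \<subseteq> X" "y \<in> Y"
  shows "\<exists>K\<in>components E X. Y \<subseteq> K"
proof
  let ?K = "{z \<in> X. (y, z) \<in> (E \<inter> X \<times> X)\<^sup>*}"
  show "?K \<in> components E X" using assms(2,3) unfolding components_iff by blast
  have mono: "(E \<inter> Y \<times> Y)\<^sup>* \<subseteq> (E \<inter> X \<times> X)\<^sup>*" using assms(2) by (intro rtrancl_mono) blast
  show "Y \<subseteq> ?K"
  proof
    fix z assume "z \<in> Y"
    then have "(y, z) \<in> (E \<inter> Y \<times> Y)\<^sup>*" using assms(1,3) unfolding connected_in_def by blast
    then show "z \<in> ?K" using mono \<open>z \<in> Y\<close> assms(2) by blast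
  qed
qed

lemma rtrancl_stays_in:
  assumes "(x, y) \<in> (E \<inter> (X \<union> Y) \<times> (X \<union> Y))\<^sup>*" "x \<in> X" "E \<inter> X \<times> Y = {}"
  shows "y \<in> X \<and> (x, y) \<in> (E \<inter> X \<times> X)\<^sup>*"
  using assms(1)
proof (induction rule: rtrancl_induct)
  case (step y z)
  have "y \<in> X" "(y, z) \<in> E" "z \<in> X \<union> Y" using step(2,3) by blast+
  then have "(y, z) \<in> E \<inter> X \<times> X" using assms(3) by blast
  with step(3) show ?case by (meson rtrancl.rtrancl_into_rtrancl SigmaD2 IntD2)
qed (use assms(2) in simp)

lemma components_Un:
  assumes "X \<inter> Y = {}" "E \<inter> X \<times> Y = {}" "E \<inter> Y \<times> X = {}"
  shows "components E (X \<union> Y) = components E X \<union> components E Y"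
proof -
  define C where "C x = {z \<in> X \<union> Y. (x, z) \<in> (E \<inter> (X \<union> Y) \<times> (X \<union> Y))\<^sup>*}" for x
  have component_eq: "{z \<in> X \<union> Y. (x, z) \<in> (E \<inter> (X \<union> Y) \<times> (X \<union> Y))\<^sup>*}
      = {z \<in> X. (x, z) \<in> (E \<inter> X \<times> X)\<^sup>*}"
    if "x \<in> X" "E \<inter> X \<times> Y = {}" for X Y x
  proof -
    have "(E \<inter> X \<times> X)\<^sup>* \<subseteq> (E \<inter> (X \<union> Y) \<times> (X \<union> Y))\<^sup>*" by (rule rtrancl_mono) blast
    then show ?thesis using rtrancl_stays_in[OF _ that] by blast
  qed
  have CX: "C x = {z \<in> X. (x, z) \<in> (E \<inter> X \<times> X)\<^sup>*}" if "x \<in> X" for x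
    unfolding C_def using component_eq[OF that assms(2)] .
  have CY: "C x = {z \<in> Y. (x, z) \<in> (E \<inter> Y \<times> Y)\<^sup>*}" if "x \<in> Y" for x
    unfolding C_def using component_eq[OF that assms(3)] by (simp add: Un_commute)
  have "components E (X \<union> Y) = C ` (X \<union> Y)" unfolding components_def C_def by blast
  also have "\<dots> = C ` X \<union> C ` Y" by (rule image_Un)
  also have "C ` X = components E X" unfolding components_def using CX by force
  also have "C ` Y = components E Y" unfolding components_def using CY by force
  finally show ?thesis .
qed

section \<open>Search trees and their costs\<close>

lemma search_tree_NodeD:
  "search_tree E S (Node r ts) \<Longrightarrow> r \<in> S \<and> distinct (map vset ts)
     \<and> set (map vset ts) = components E (S - {r}) \<and> (\<forall>t\<in>set ts. search_tree E (vset t) t)"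
  by (erule search_tree.cases) auto

lemma search_tree_induct [consumes 1, case_names Node]:
  assumes "search_tree E S t"
    and "\<And>r S ts. search_tree E S (Node r ts) \<Longrightarrow> (\<And>t. t \<in> set ts \<Longrightarrow> P (vset t) t)
          \<Longrightarrow> P S (Node r ts)"
  shows "P S t"
proof -
  have "E' = E \<longrightarrow> P S t" if "search_tree E' S t" for E'
    using that
  proof (induction rule: search_tree.induct)
    case (1 r S ts E')
    then show ?case using assms(2)[of S r ts] search_tree.intros[of r S ts E'] by blast
  qed
  then show ?thesis using assms(1) by blast
qed

lemma finite_vset: "finite (vset t)"
  by (induction t) auto

lemma Union_vset_children:
  "search_tree E S (Node r ts) \<Longrightarrow> (\<Union>t\<in>set ts. vset t) = S - {r}"
  using search_tree_NodeD Union_components by (metis image_set)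

lemma vset_search_tree:
  assumes "search_tree E S t"
  shows "vset t = S"
proof (cases t)
  case (Node r ts)
  then have st: "search_tree E S (Node r ts)" using assms by simp
  have "r \<in> S" using search_tree_NodeD[OF st] by blast
  then show ?thesis using Node Union_vset_children[OF st] by (simp add: insert_absorb)
qed

lemma search_tree_child:
  assumes "search_tree E S (Node r ts)" "t \<in> set ts"
  shows "search_tree E (vset t) t" "vset t \<in> components E (S - {r})" "vset t \<subseteq> S - {r}"
proof -
  show "search_tree E (vset t) t" "vset t \<in> components E (S - {r})"
    using search_tree_NodeD[OF assms(1)] assms(2) by (metis image_eqI set_map)+
  then show "vset t \<subseteq> S - {r}" by (simp add: components_subset)
qed

lemma search_tree_children_disjoint:
  assumes "sym E" "search_tree E S (Node r ts)" "t1 \<in> set ts" "t2 \<in> set ts" "t1 \<noteq> t2"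
  shows "vset t1 \<inter> vset t2 = {}"
proof -
  have "inj_on vset (set ts)" using search_tree_NodeD[OF assms(2)] by (simp add: distinct_map)
  then have "vset t1 \<noteq> vset t2" using assms(3-5) by (meson inj_onD)
  then show ?thesis
    using components_disjoint[OF assms(1)] search_tree_child(2)[OF assms(2)] assms(3,4) by blast
qed

lemma sum_Diff_root_search_tree:
  assumes "sym E" "search_tree E S (Node r ts)"
  shows "sum f (S - {r}) = (\<Sum>t\<in>set ts. sum f (vset t))"
  unfolding Union_vset_children[OF assms(2), symmetric]
  by (rule sum.UNION_disjoint) (auto simp: finite_vset dest: search_tree_children_disjoint[OF assms])

lemma sum_list_map_children:
  assumes "search_tree E S (Node r ts)"
  shows "sum_list (map g ts) = (\<Sum>t\<in>set ts. g t)"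
proof -
  have "distinct ts" using search_tree_NodeD[OF assms] by (simp add: distinct_map)
  then show ?thesis by (simp add: sum_list_distinct_conv_sum_set)
qed

lemma search_tree_cong:
  assumes "search_tree E S t" "E \<inter> S \<times> S = E' \<inter> S \<times> S"
  shows "search_tree E' S t"
  using assms
proof (induction rule: search_tree.induct)
  case (1 r S ts E)
  have "components E (S - {r}) = components E' (S - {r})"
    using "1.prems" by (intro components_cong) blast
  moreover have "E \<inter> vset t \<times> vset t = E' \<inter> vset t \<times> vset t" if "t \<in> set ts" for t
  proof -
    have "vset t \<subseteq> S" using 1(3) components_subset that by (metis Diff_subset image_eqI set_map subset_trans)
    then show ?thesis using "1.prems" by blast
  qed
  ultimately show ?case using 1 by (intro search_tree.intros) auto
qed

lemma search_tree_leaf: "search_tree E {c} (Node c [])"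
  by (rule search_tree.intros) auto

lemma subtrees_vset: "s \<in> subtrees t \<Longrightarrow> vset s \<subseteq> vset t"
  by (induction t rule: vset.induct) auto

lemma centroid_tree_cong:
  assumes "centroid_tree S E w C" "E \<inter> S \<times> S = E' \<inter> S \<times> S"
  shows "centroid_tree S E' w C"
proof -
  have st: "search_tree E S C" and cent: "\<forall>s\<in>subtrees C. is_centroid E (vset s) w (root s)"
    using assms(1) unfolding centroid_tree_def by auto
  have "is_centroid E' (vset s) w (root s)" if s: "s \<in> subtrees C" for s
  proof -
    have "vset s - {root s} \<subseteq> S" using subtrees_vset[OF s] vset_search_tree[OF st] by blast
    then have "components E (vset s - {root s}) = components E' (vset s - {root s})"
      using assms(2) by (intro components_cong) blast
    then show ?thesis using cent s unfolding is_centroid_def by auto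
  qed
  then show ?thesis using search_tree_cong[OF st assms(2)] unfolding centroid_tree_def by auto
qed

lemma search_tree_append_child:
  assumes "search_tree E X (Node r ts)" "search_tree E Y t" "X \<inter> Y = {}"
    and "components E (X \<union> Y - {r}) = insert Y (components E (X - {r}))"
  shows "search_tree E (X \<union> Y) (Node r (ts @ [t]))"
proof (rule search_tree.intros)
  note X = search_tree_NodeD[OF assms(1)]
  have vt: "vset t = Y" by (rule vset_search_tree[OF assms(2)])
  have "Y \<noteq> {}" using vt by (cases t) auto
  then have "Y \<notin> components E (X - {r})" using components_subset assms(3) by blast
  then show "distinct (map vset (ts @ [t]))" using X vt by simp
  show "set (map vset (ts @ [t])) = components E (X \<union> Y - {r})" using X vt assms(4) by simp
  show "r \<in> X \<union> Y" using X by blast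
  show "\<forall>s\<in>set (ts @ [t]). search_tree E (vset s) s" using X assms(2) vt by auto
qed

lemma cost_at_append_child:
  "cost_at w d (Node r (ts @ [t])) = cost_at w d (Node r ts) + cost_at w (Suc d) t"
  by simp

fun ancestors :: "'a rtree \<Rightarrow> 'a \<Rightarrow> 'a set" where
  "ancestors (Node r ts) x = (if x \<in> vset (Node r ts) then {r} else {}) \<union> (\<Union>t\<in>set ts. ancestors t x)"

lemma ancestors_subset: "ancestors t x \<subseteq> vset t"
  by (induction t x rule: ancestors.induct) auto

lemma ancestors_empty: "x \<notin> vset t \<Longrightarrow> ancestors t x = {}"
  by (induction t x rule: ancestors.induct) auto

lemma ancestors_self: "x \<in> vset t \<Longrightarrow> x \<in> ancestors t x"
  by (induction t x rule: ancestors.induct) auto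

lemma finite_ancestors: "finite (ancestors t x)"
  using ancestors_subset finite_vset by (rule finite_subset)

lemma ancestors_child:
  assumes "sym E" "search_tree E S (Node r ts)" "t \<in> set ts" "x \<in> vset t"
  shows "ancestors (Node r ts) x = insert r (ancestors t x)" "r \<notin> ancestors t x"
proof -
  have "ancestors t' x = {}" if "t' \<in> set ts" "t' \<noteq> t" for t'
  proof (rule ancestors_empty)
    show "x \<notin> vset t'"
      using search_tree_children_disjoint[OF assms(1,2) that(1) assms(3) that(2)] assms(4) by blast
  qed
  then have "(\<Union>t'\<in>set ts. ancestors t' x) = ancestors t x" using assms(3) by auto
  moreover have "x \<in> vset (Node r ts)" using assms(3,4) by auto
  ultimately show "ancestors (Node r ts) x = insert r (ancestors t x)" by simp
  show "r \<notin> ancestors t x"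
    using search_tree_child(3)[OF assms(2,3)] ancestors_subset[of t x] by blast
qed

lemma ancestors_root:
  assumes "search_tree E S (Node r ts)"
  shows "ancestors (Node r ts) r = {r}"
proof -
  have "r \<notin> vset t" if "t \<in> set ts" for t
    using search_tree_child(3)[OF assms that] by blast
  then show ?thesis by (auto simp: ancestors_empty)
qed

text \<open>The depth of \<open>x\<close> in \<open>T\<close> is the number of its ancestors (itself included).\<close>

lemma cost_at_eq_sum_ancestors:
  assumes "sym E" "search_tree E S T"
  shows "cost_at w d T = (\<Sum>x\<in>S. w x * (real d + real (card (ancestors T x)) - 1))"
  using assms(2)
proof (induction arbitrary: d rule: search_tree_induct)
  case (Node r S ts)
  note st = Node.hyps
  have "r \<in> S" using search_tree_NodeD[OF st] by blast
  let ?f = "\<lambda>x. w x * (real d + real (card (ancestors (Node r ts) x)) - 1)"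
  have "finite S" using vset_search_tree[OF st] finite_vset by metis
  then have "(\<Sum>x\<in>S. ?f x) = ?f r + sum ?f (S - {r})"
    using \<open>r \<in> S\<close> by (rule sum.remove)
  also have "sum ?f (S - {r}) = (\<Sum>t\<in>set ts. sum ?f (vset t))"
    by (rule sum_Diff_root_search_tree[OF assms(1) st])
  also have "?f r = real d * w r" using ancestors_root[OF st] by (simp del: ancestors.simps)
  also have "(\<Sum>t\<in>set ts. sum ?f (vset t)) = (\<Sum>t\<in>set ts. cost_at w (Suc d) t)"
  proof (rule sum.cong[OF refl])
    fix t assume t: "t \<in> set ts"
    have "sum ?f (vset t) = (\<Sum>x\<in>vset t. w x * (real (Suc d) + real (card (ancestors t x)) - 1))"
    proof (rule sum.cong[OF refl])
      fix x assume "x \<in> vset t"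
      from ancestors_child[OF assms(1) st t this] finite_ancestors[of t x]
      have "card (ancestors (Node r ts) x) = Suc (card (ancestors t x))" by simp
      then show "?f x = w x * (real (Suc d) + real (card (ancestors t x)) - 1)" by simp
    qed
    also have "\<dots> = cost_at w (Suc d) t" using Node.IH t by simp
    finally show "sum ?f (vset t) = cost_at w (Suc d) t" .
  qed
  also have "\<dots> = sum_list (map (cost_at w (Suc d)) ts)" by (simp only: sum_list_map_children[OF st])
  finally show ?case by simp
qed

lemma cost_at_Suc:
  assumes "sym E" "search_tree E S t"
  shows "cost_at w (Suc d) t = cost_at w d t + sum w S"
proof -
  have "(\<Sum>x\<in>S. w x * (real (Suc d) + real (card (ancestors t x)) - 1))
      = (\<Sum>x\<in>S. w x * (real d + real (card (ancestors t x)) - 1) + w x)"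
    by (rule sum.cong) (simp_all add: algebra_simps)
  then show ?thesis unfolding cost_at_eq_sum_ancestors[OF assms] by (simp add: sum.distrib)
qed

lemma cost_at_Node:
  assumes "sym E" "search_tree E S (Node c ts)"
  shows "cost_at w 1 (Node c ts) = w c + (\<Sum>t\<in>set ts. cost_at w 1 t + sum w (vset t))"
proof -
  have "cost_at w 1 (Node c ts) = w c + (\<Sum>t\<in>set ts. cost_at w (Suc 1) t)"
    using sum_list_map_children[OF assms(2)] by simp
  also have "(\<Sum>t\<in>set ts. cost_at w (Suc 1) t) = (\<Sum>t\<in>set ts. cost_at w 1 t + sum w (vset t))"
    using cost_at_Suc[OF assms(1) search_tree_child(1)[OF assms(2)]] by simp
  finally show ?thesis .
qed

lemma search_tree_top_ancestor:
  assumes "search_tree E S T" "H \<subseteq> S" "H \<noteq> {}" "connected_in E H"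
  shows "\<exists>r\<in>H. \<forall>x\<in>H. r \<in> ancestors T x"
  using assms
proof (induction arbitrary: H rule: search_tree_induct)
  case (Node r S ts)
  show ?case
  proof (cases "r \<in> H")
    case True
    have "vset (Node r ts) = S" using Node.hyps by (rule vset_search_tree)
    then show ?thesis using True Node.prems(1) by auto
  next
    case False
    obtain h where "h \<in> H" using Node.prems(2) by blast
    moreover have "H \<subseteq> S - {r}" using Node.prems(1) False by blast
    ultimately obtain K where "K \<in> components E (S - {r})" "H \<subseteq> K"
      using component_containing_connected[OF Node.prems(3)] by blast
    then obtain t where t: "t \<in> set ts" "H \<subseteq> vset t"
      using search_tree_NodeD[OF Node.hyps] by (metis imageE set_map)
    then have "\<exists>r'\<in>H. \<forall>x\<in>H. r' \<in> ancestors t x" by (rule Node.IH[OF _ _ Node.prems(2,3)])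
    then show ?thesis using t(1) by auto
  qed
qed

section \<open>Centroid trees cost at most twice the optimum\<close>

text \<open>\<open>potential w T H\<close> is the cost of the search tree that \<open>T\<close> induces on \<open>H\<close>.\<close>

definition potential :: "('a \<Rightarrow> real) \<Rightarrow> 'a rtree \<Rightarrow> 'a set \<Rightarrow> real" where
  "potential w T H = (\<Sum>x\<in>H. w x * real (card (ancestors T x \<inter> H)))"

lemma potential_eq_cost:
  assumes "sym E" "search_tree E S T"
  shows "potential w T S = cost w T"
proof -
  have "ancestors T x \<inter> S = ancestors T x" for x
    using ancestors_subset[of T x] vset_search_tree[OF assms(2)] by blast
  then show ?thesis
    unfolding potential_def cost_def cost_at_eq_sum_ancestors[OF assms] by simp
qed

lemma potential_le_sum_ancestors:
  assumes "K \<subseteq> H" "\<forall>x\<in>K. w x \<ge> 0" "finite R" "R \<subseteq> H - K" "\<forall>x\<in>K. R \<subseteq> ancestors T x"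
  shows "potential w T K + real (card R) * sum w K \<le> (\<Sum>x\<in>K. w x * real (card (ancestors T x \<inter> H)))"
proof -
  have "w x * real (card (ancestors T x \<inter> K)) + real (card R) * w x
      \<le> w x * real (card (ancestors T x \<inter> H))" if x: "x \<in> K" for x
  proof -
    have "(ancestors T x \<inter> K) \<union> R \<subseteq> ancestors T x \<inter> H" using assms(1,4,5) x by blast
    then have "card ((ancestors T x \<inter> K) \<union> R) \<le> card (ancestors T x \<inter> H)"
      using finite_ancestors[of T x] by (intro card_mono) auto
    moreover have "card ((ancestors T x \<inter> K) \<union> R) = card (ancestors T x \<inter> K) + card R"
      using assms(3,4) finite_ancestors[of T x] by (intro card_Un_disjoint) auto
    ultimately have "real (card (ancestors T x \<inter> K)) + real (card R) \<le> real (card (ancestors T x \<inter> H))"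
      by linarith
    then have "w x * (real (card (ancestors T x \<inter> K)) + real (card R))
        \<le> w x * real (card (ancestors T x \<inter> H))"
      using assms(2) x by (intro mult_left_mono) auto
    then show ?thesis by (simp add: algebra_simps)
  qed
  then have "(\<Sum>x\<in>K. w x * real (card (ancestors T x \<inter> K)) + real (card R) * w x)
      \<le> (\<Sum>x\<in>K. w x * real (card (ancestors T x \<inter> H)))"
    by (rule sum_mono)
  then show ?thesis unfolding potential_def by (simp add: sum.distrib sum_distrib_left)
qed

lemma potential_ge_children:
  assumes "sym E" "search_tree E H (Node c ts)" "\<forall>x\<in>H. w x \<ge> 0" "c \<in> vset T"
    and "r \<in> H" "\<forall>x\<in>H. r \<in> ancestors T x"
  shows "w c * (1 + real (card ({r} - {c}))) + (\<Sum>t\<in>set ts. potential w T (vset t))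
      + (\<Sum>t\<in>set ts. real (card ({r} - vset t)) * sum w (vset t)) \<le> potential w T H"
proof -
  let ?g = "\<lambda>x. w x * real (card (ancestors T x \<inter> H))"
  have fin: "finite H" using vset_search_tree[OF assms(2)] finite_vset by metis
  have cH: "c \<in> H" using search_tree_NodeD[OF assms(2)] by blast
  have "potential w T H = ?g c + (\<Sum>t\<in>set ts. sum ?g (vset t))"
    unfolding potential_def sum_Diff_root_search_tree[OF assms(1,2), symmetric]
    using fin cH by (rule sum.remove)
  moreover have "potential w T {c} = w c"
    using ancestors_self[OF assms(4)] by (simp add: potential_def)
  then have "w c * (1 + real (card ({r} - {c}))) \<le> ?g c"
    using potential_le_sum_ancestors[of "{c}" H w "{r} - {c}" T] cH assms(3,5,6)
    by (auto simp: algebra_simps)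
  moreover have "potential w T (vset t) + real (card ({r} - vset t)) * sum w (vset t) \<le> sum ?g (vset t)"
    if "t \<in> set ts" for t
    using potential_le_sum_ancestors[of "vset t" H w "{r} - vset t" T]
      search_tree_child(3)[OF assms(2) that] assms(3,5,6) by auto
  then have "(\<Sum>t\<in>set ts. potential w T (vset t))
      + (\<Sum>t\<in>set ts. real (card ({r} - vset t)) * sum w (vset t)) \<le> (\<Sum>t\<in>set ts. sum ?g (vset t))"
    by (simp add: sum.distrib[symmetric] sum_mono)
  ultimately show ?thesis by linarith
qed

lemma potential_ge_children_centroid:
  assumes "sym E" "search_tree E H (Node c ts)" "\<forall>x\<in>H. w x \<ge> 0" "is_centroid E H w c" "c \<in> vset T"
    and "r \<in> H" "\<forall>x\<in>H. r \<in> ancestors T x"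
  shows "2 * (\<Sum>t\<in>set ts. potential w T (vset t)) + sum w H + w c \<le> 2 * potential w T H"
proof -
  note st = assms(2)
  note potential = potential_ge_children[OF assms(1,2,3,5,6,7)]
  have fin: "finite H" using vset_search_tree[OF st] finite_vset by metis
  have cH: "c \<in> H" using search_tree_NodeD[OF st] by blast
  have sub: "vset t \<subseteq> H - {c}" if "t \<in> set ts" for t using search_tree_child(3)[OF st that] .
  have children_weight: "(\<Sum>t\<in>set ts. sum w (vset t)) = sum w H - w c"
    using sum.remove[OF fin cH, of w] sum_Diff_root_search_tree[OF assms(1) st, of w] by simp
  have "w c \<ge> 0" "w c \<le> sum w H" using assms(3) cH fin by (auto intro: member_le_sum)
  show ?thesis
  proof (cases "r = c")
    case True
    then have "{r} - vset t = {r}" if "t \<in> set ts" for t using sub[OF that] by blast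
    then have "(\<Sum>t\<in>set ts. real (card ({r} - vset t)) * sum w (vset t)) = sum w H - w c"
      using children_weight by simp
    then show ?thesis using potential True \<open>w c \<le> sum w H\<close> by simp
  next
    case False
    then obtain t0 where t0: "t0 \<in> set ts" "r \<in> vset t0"
      using assms(6) Union_vset_children[OF st] by blast
    have "{r} - vset t = {r}" if "t \<in> set ts - {t0}" for t
      using search_tree_children_disjoint[OF assms(1) st _ t0(1)] that t0(2) by blast
    then have "(\<Sum>t\<in>set ts - {t0}. real (card ({r} - vset t)) * sum w (vset t))
        = (\<Sum>t\<in>set ts - {t0}. sum w (vset t))"
      by (intro sum.cong) auto
    then have "(\<Sum>t\<in>set ts. real (card ({r} - vset t)) * sum w (vset t))
        = (\<Sum>t\<in>set ts. sum w (vset t)) - sum w (vset t0)"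
      using t0 sum.remove[OF finite_set t0(1), of "\<lambda>t. real (card ({r} - vset t)) * sum w (vset t)"]
        sum.remove[OF finite_set t0(1), of "\<lambda>t. sum w (vset t)"] by simp
    moreover have "sum w (vset t0) \<le> sum w H / 2"
      using assms(4) search_tree_child(2)[OF st t0(1)] by (auto simp: is_centroid_def)
    ultimately show ?thesis using potential children_weight False \<open>w c \<ge> 0\<close> by simp
  qed
qed

lemma centroid_cost_le_potential:
  assumes "sym E" "search_tree E S T" "\<forall>x\<in>S. w x \<ge> 0"
    and "search_tree E H C" "\<forall>s\<in>subtrees C. is_centroid E (vset s) w (root s)"
    and "H \<subseteq> S" "connected_in E H"
  shows "cost_at w 1 C \<le> 2 * potential w T H - sum w H"
  using assms(4-7)
proof (induction rule: search_tree_induct)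
  case (Node c H ts)
  note st = Node.hyps
  have "cost_at w 1 t + sum w (vset t) \<le> 2 * potential w T (vset t)" if t: "t \<in> set ts" for t
  proof -
    have "\<forall>s\<in>subtrees t. is_centroid E (vset s) w (root s)" using Node.prems(1) t by auto
    moreover have "vset t \<subseteq> S" using search_tree_child(3)[OF st t] Node.prems(2) by blast
    moreover have "connected_in E (vset t)"
      using connected_in_component[OF assms(1) search_tree_child(2)[OF st t]] .
    ultimately have "cost_at w 1 t \<le> 2 * potential w T (vset t) - sum w (vset t)"
      by (rule Node.IH[OF t])
    then show ?thesis by simp
  qed
  then have "cost_at w 1 (Node c ts) \<le> w c + 2 * (\<Sum>t\<in>set ts. potential w T (vset t))"
    unfolding cost_at_Node[OF assms(1) st] sum_distrib_left by (intro add_left_mono sum_mono) auto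
  have cH: "c \<in> H" using search_tree_NodeD[OF st] by blast
  obtain r where r: "r \<in> H" "\<forall>x\<in>H. r \<in> ancestors T x"
    using search_tree_top_ancestor[OF assms(2) Node.prems(2) _ Node.prems(3)] cH by blast
  have "is_centroid E H w c" using Node.prems(1) vset_search_tree[OF st] by simp
  moreover have "c \<in> vset T" using cH Node.prems(2) vset_search_tree[OF assms(2)] by blast
  moreover have "\<forall>x\<in>H. w x \<ge> 0" using assms(3) Node.prems(2) by blast
  ultimately have "2 * (\<Sum>t\<in>set ts. potential w T (vset t)) + sum w H + w c \<le> 2 * potential w T H"
    using potential_ge_children_centroid[OF assms(1) st _ _ _ r] by blast
  with \<open>cost_at w 1 (Node c ts) \<le> _\<close> show ?case by linarith
qed

lemma centroid_tree_cost_le: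
  assumes "sym E" "connected_in E S" "\<forall>x\<in>S. w x \<ge> 0" "search_tree E S T" "centroid_tree S E w C"
  shows "cost w C \<le> 2 * cost w T - sum w S"
  using centroid_cost_le_potential[OF assms(1,4,3), of S C] assms(2,5)
  unfolding centroid_tree_def potential_eq_cost[OF assms(1,4)] cost_def by blast

lemma cost_at_nonneg: "\<forall>x\<in>vset t. w x \<ge> 0 \<Longrightarrow> cost_at w d t \<ge> 0"
  by (induction w d t rule: cost_at.induct) (auto intro!: add_nonneg_nonneg sum_list_nonneg)

lemma OPT_le_cost:
  assumes "\<forall>x\<in>S. w x \<ge> 0" "search_tree E S T"
  shows "OPT S E w \<le> cost w T"
  unfolding OPT_def
proof (rule cInf_lower)
  show "cost w T \<in> {cost w T | T. search_tree E S T}" using assms(2) by blast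
  show "bdd_below {cost w T | T. search_tree E S T}"
  proof (rule bdd_belowI)
    fix x assume "x \<in> {cost w T | T. search_tree E S T}"
    then obtain T' where "x = cost w T'" "search_tree E S T'" by blast
    then show "0 \<le> x" using assms(1) vset_search_tree cost_at_nonneg unfolding cost_def by metis
  qed
qed

lemma centroid_tree_cost_le_OPT:
  assumes "sym E" "connected_in E S" "\<forall>x\<in>S. w x \<ge> 0" "centroid_tree S E w C"
  shows "cost w C + sum w S \<le> 2 * OPT S E w"
proof -
  have "(cost w C + sum w S) / 2 \<le> OPT S E w"
    unfolding OPT_def
  proof (rule cInf_greatest)
    show "{cost w T | T. search_tree E S T} \<noteq> {}" using assms(4) unfolding centroid_tree_def by blast
    fix x assume "x \<in> {cost w T | T. search_tree E S T}"
    then obtain T where "x = cost w T" "search_tree E S T" by blast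
    then show "(cost w C + sum w S) / 2 \<le> x" using centroid_tree_cost_le[OF assms(1-3) _ assms(4)] by force
  qed
  then show ?thesis by simp
qed

lemma sum_list_map_divide: "(\<Sum>t\<leftarrow>ts. f t / a) = (\<Sum>t\<leftarrow>ts. f t) / (a :: real)"
  by (induction ts) (simp_all add: add_divide_distrib)

lemma cost_at_divide: "cost_at (\<lambda>x. u x / a) d t = cost_at u d t / a"
proof (induction t arbitrary: d)
  case (Node r ts)
  have "(\<Sum>t\<leftarrow>ts. cost_at (\<lambda>x. u x / a) (Suc d) t) = (\<Sum>t\<leftarrow>ts. cost_at u (Suc d) t / a)"
    using Node by (intro arg_cong[where f = sum_list] map_cong) simp_all
  then show ?case by (simp add: sum_list_map_divide add_divide_distrib)
qed

lemma centroid_tree_divide: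
  assumes "a > 0"
  shows "centroid_tree S E (\<lambda>x. u x / a) C \<longleftrightarrow> centroid_tree S E u C"
proof -
  have "is_centroid E H (\<lambda>x. u x / a) v \<longleftrightarrow> is_centroid E H u v" for H v
    using assms by (simp add: is_centroid_def field_simps flip: sum_divide_distrib)
  then show ?thesis unfolding centroid_tree_def by simp
qed

section \<open>Joining two trees through a new vertex\<close>

lemma centroid_connected_le_half:
  assumes "is_centroid E S w r" "finite S" "\<forall>x\<in>S. w x \<ge> 0"
    and "Y \<subseteq> S - {r}" "y \<in> Y" "connected_in E Y"
  shows "sum w Y \<le> sum w S / 2"
proof -
  obtain K where K: "K \<in> components E (S - {r})" "Y \<subseteq> K"
    using component_containing_connected[OF assms(6,4,5)] by blast
  have "K \<subseteq> S" using components_subset[OF K(1)] by blast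
  then have "sum w Y \<le> sum w K"
    using K(2) assms(2,3) by (intro sum_mono2) (auto intro: finite_subset)
  also have "\<dots> \<le> sum w S / 2" using assms(1) K(1) unfolding is_centroid_def by blast
  finally show ?thesis .
qed

definition join_edges :: "('a \<times> 'a) set \<Rightarrow> ('a \<times> 'a) set \<Rightarrow> 'a \<Rightarrow> 'a \<Rightarrow> 'a \<Rightarrow> ('a \<times> 'a) set" where
  "join_edges E1 E2 d1 c d2 = E1 \<union> E2 \<union> {(d1, c), (c, d1), (d2, c), (c, d2)}"

locale tree_join =
  fixes A B :: "'a set" and E1 E2 :: "('a \<times> 'a) set" and d1 c d2 :: 'a
  assumes tree_A: "is_tree A E1" and tree_B: "is_tree B E2"
    and d1: "d1 \<in> A" and d2: "d2 \<in> B" and disjoint: "A \<inter> B = {}" and c_notin: "c \<notin> A" "c \<notin> B"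
begin

abbreviation "E \<equiv> join_edges E1 E2 d1 c d2"

lemma E1_subset: "E1 \<subseteq> A \<times> A" and E2_subset: "E2 \<subseteq> B \<times> B"
  using tree_A tree_B by (auto simp: is_tree_def)

lemma E_Int_A: "E \<inter> A \<times> A = E1 \<inter> A \<times> A" and E_Int_B: "E \<inter> B \<times> B = E2 \<inter> B \<times> B"
  using E1_subset E2_subset disjoint c_notin by (auto simp: join_edges_def)

lemma sym_E: "sym E"
  using tree_A tree_B by (auto simp: is_tree_def join_edges_def sym_def)

lemma connected_A: "connected_in E A" and connected_B: "connected_in E B"
proof -
  have "connected_in E1 A" "connected_in E2 B"
    using tree_A tree_B E1_subset E2_subset by (simp_all add: is_tree_def connected_in_iff_rtrancl)
  then show "connected_in E A" "connected_in E B"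
    by (auto elim!: connected_in_mono simp: join_edges_def)
qed

lemma connected_A_c: "connected_in E (A \<union> {c})" and connected_B_c: "connected_in E (B \<union> {c})"
  using connected_in_Un[OF sym_E connected_A connected_in_singleton d1]
    connected_in_Un[OF sym_E connected_B connected_in_singleton d2]
  by (auto simp: join_edges_def)

lemma is_tree_join: "is_tree (A \<union> B \<union> {c}) E"
proof -
  have fin: "finite A" "finite B" "finite E1" "finite E2"
    using tree_A tree_B E1_subset E2_subset by (auto simp: is_tree_def intro: finite_subset)
  have neq: "d1 \<noteq> c" "d2 \<noteq> c" "d1 \<noteq> d2" using d1 d2 c_notin disjoint by auto
  have "connected_in E (A \<union> {c} \<union> B)"
    using connected_in_Un[OF sym_E connected_A_c connected_B, of c d2] d2 by (auto simp: join_edges_def)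
  moreover have sub: "E \<subseteq> (A \<union> B \<union> {c}) \<times> (A \<union> B \<union> {c})"
    using E1_subset E2_subset d1 d2 by (auto simp: join_edges_def)
  ultimately have reach: "\<forall>x\<in>A \<union> B \<union> {c}. \<forall>y\<in>A \<union> B \<union> {c}. (x, y) \<in> E\<^sup>*"
    by (simp add: connected_in_iff_rtrancl Un_ac)
  let ?N = "{(d1, c), (c, d1), (d2, c), (c, d2)}"
  have "E1 \<inter> E2 = {}" "(E1 \<union> E2) \<inter> ?N = {}"
    using E1_subset E2_subset disjoint c_notin by blast+
  then have "card E = card (E1 \<union> E2) + card ?N" "card (E1 \<union> E2) = card E1 + card E2"
    unfolding join_edges_def using fin by (auto intro: card_Un_disjoint simp del: Un_insert_right)
  moreover have "card ?N = 4" using neq by simp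
  ultimately have "card E = card E1 + card E2 + 4" by simp
  moreover have "card (A \<union> B \<union> {c}) = card A + card B + 1"
    using fin disjoint c_notin by (simp add: card_Un_disjoint)
  moreover have "card A \<ge> 1" "card B \<ge> 1" using fin d1 d2 by (auto simp: Suc_le_eq card_gt_0_iff)
  ultimately have "card E = 2 * (card (A \<union> B \<union> {c}) - 1)"
    using tree_A tree_B by (simp add: is_tree_def)
  moreover have "irrefl E"
    using tree_A tree_B neq by (auto simp: is_tree_def join_edges_def irrefl_def)
  ultimately show ?thesis using fin sub reach sym_E by (simp add: is_tree_def)
qed

lemma components_Diff_c: "components E (A \<union> B \<union> {c} - {c}) = {A, B}"
proof -
  have "A \<union> B \<union> {c} - {c} = A \<union> B" using c_notin by blast
  moreover have "components E (A \<union> B) = components E A \<union> components E B"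
    using E1_subset E2_subset disjoint c_notin by (intro components_Un) (auto simp: join_edges_def)
  ultimately show ?thesis
    using components_of_connected[OF connected_A] components_of_connected[OF connected_B] d1 d2 by auto
qed

lemma components_Diff_d1: "components E (A \<union> (B \<union> {c}) - {d1}) = insert (B \<union> {c}) (components E (A - {d1}))"
proof -
  have "A \<union> (B \<union> {c}) - {d1} = (A - {d1}) \<union> (B \<union> {c})" using d1 disjoint c_notin by blast
  moreover have "components E ((A - {d1}) \<union> (B \<union> {c})) = components E (A - {d1}) \<union> components E (B \<union> {c})"
    using E1_subset E2_subset disjoint c_notin d2 by (intro components_Un) (auto simp: join_edges_def)
  ultimately show ?thesis using components_of_connected[OF connected_B_c] by auto
qed

lemma components_Diff_d2: "components E (B \<union> {c} - {d2}) = insert {c} (components E (B - {d2}))"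
proof -
  have "B \<union> {c} - {d2} = (B - {d2}) \<union> {c}" using d2 c_notin by blast
  moreover have "components E ((B - {d2}) \<union> {c}) = components E (B - {d2}) \<union> components E {c}"
    using E1_subset E2_subset disjoint c_notin d1 d2 by (intro components_Un) (auto simp: join_edges_def)
  moreover have "components E {c} = {{c}}" by (rule components_of_connected[OF connected_in_singleton]) simp
  ultimately show ?thesis by simp
qed

lemma finite_A: "finite A" and finite_B: "finite B"
  using tree_A tree_B by (auto simp: is_tree_def)

lemma search_tree_join:
  assumes "search_tree E1 A (Node d1 ts1)" "search_tree E2 B (Node d2 ts2)"
  defines "T \<equiv> Node d1 (ts1 @ [Node d2 (ts2 @ [Node c []])])"
  shows "search_tree E (A \<union> B \<union> {c}) T"
    and "cost_at u 1 T = cost_at u 1 (Node d1 ts1) + cost_at u 1 (Node d2 ts2) + sum u B + 3 * u c"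
proof -
  have stA: "search_tree E A (Node d1 ts1)" using search_tree_cong[OF assms(1) E_Int_A[symmetric]] .
  have stB: "search_tree E B (Node d2 ts2)" using search_tree_cong[OF assms(2) E_Int_B[symmetric]] .
  have stBc: "search_tree E (B \<union> {c}) (Node d2 (ts2 @ [Node c []]))"
    using search_tree_append_child[OF stB search_tree_leaf] c_notin components_Diff_d2 by simp
  have "search_tree E (A \<union> (B \<union> {c})) T"
    unfolding T_def using search_tree_append_child[OF stA stBc] disjoint c_notin components_Diff_d1 by blast
  then show "search_tree E (A \<union> B \<union> {c}) T" by (simp add: Un_assoc)
  have "cost_at u (Suc 1) (Node d2 (ts2 @ [Node c []]))
      = cost_at u 1 (Node d2 (ts2 @ [Node c []])) + sum u (B \<union> {c})"
    by (rule cost_at_Suc[OF sym_E stBc])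
  moreover have "sum u (B \<union> {c}) = sum u B + u c" using finite_B c_notin by simp
  ultimately show "cost_at u 1 T = cost_at u 1 (Node d1 ts1) + cost_at u 1 (Node d2 ts2) + sum u B + 3 * u c"
    unfolding T_def cost_at_append_child by simp
qed

context
  fixes u :: "'a \<Rightarrow> real"
  assumes nonneg: "\<forall>x\<in>A \<union> B \<union> {c}. u x \<ge> 0" and balanced: "sum u A = sum u B" and pos: "u c > 0"
begin

lemma sum_join: "sum u (A \<union> B \<union> {c}) = sum u A + sum u B + u c"
  using finite_A finite_B disjoint c_notin by (simp add: sum.union_disjoint)

lemma is_centroid_join: "is_centroid E (A \<union> B \<union> {c}) u c"
  unfolding is_centroid_def components_Diff_c using sum_join balanced pos by auto

lemma centroid_eq_join:
  assumes "is_centroid E (A \<union> B \<union> {c}) u r"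
  shows "r = c"
proof (rule ccontr)
  assume "r \<noteq> c"
  have fin: "finite (A \<union> B \<union> {c})" using finite_A finite_B by simp
  have r: "r \<in> A \<union> B \<union> {c}" using assms by (simp add: is_centroid_def)
  have "sum u (B \<union> {c}) \<le> sum u (A \<union> B \<union> {c}) / 2 \<or> sum u (A \<union> {c}) \<le> sum u (A \<union> B \<union> {c}) / 2"
  proof (cases "r \<in> A")
    case True
    then have "B \<union> {c} \<subseteq> A \<union> B \<union> {c} - {r}" using disjoint c_notin by blast
    then show ?thesis using centroid_connected_le_half[OF assms fin nonneg _ _ connected_B_c] by blast
  next
    case False
    then have "A \<union> {c} \<subseteq> A \<union> B \<union> {c} - {r}" using r \<open>r \<noteq> c\<close> disjoint c_notin by blast
    then show ?thesis using centroid_connected_le_half[OF assms fin nonneg _ _ connected_A_c] by blast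
  qed
  moreover have "sum u (B \<union> {c}) = sum u B + u c" "sum u (A \<union> {c}) = sum u A + u c"
    using finite_A finite_B c_notin by simp_all
  ultimately show False using sum_join balanced pos by auto
qed

lemma centroid_tree_join:
  assumes "centroid_tree A E1 u CA" "centroid_tree B E2 u CB"
  shows "centroid_tree (A \<union> B \<union> {c}) E u (Node c [CA, CB])"
proof -
  have CA: "centroid_tree A E u CA" and CB: "centroid_tree B E u CB"
    using centroid_tree_cong assms E_Int_A E_Int_B by metis+
  then have "vset CA = A" "vset CB = B" using vset_search_tree unfolding centroid_tree_def by blast+
  moreover have "A \<noteq> B" using d1 disjoint by blast
  ultimately have "search_tree E (A \<union> B \<union> {c}) (Node c [CA, CB])"
    using CA CB components_Diff_c by (intro search_tree.intros) (auto simp: centroid_tree_def)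
  moreover have "is_centroid E (vset s) u (root s)" if "s \<in> subtrees (Node c [CA, CB])" for s
    using that CA CB is_centroid_join vset_search_tree[OF calculation]
    by (auto simp: centroid_tree_def)
  ultimately show ?thesis unfolding centroid_tree_def by blast
qed

lemma cost_centroid_tree_join:
  assumes "centroid_tree (A \<union> B \<union> {c}) E u C"
    and "\<And>C'. centroid_tree A E1 u C' \<Longrightarrow> cost_at u 1 C' = \<kappa>"
    and "\<And>C'. centroid_tree B E2 u C' \<Longrightarrow> cost_at u 1 C' = \<kappa>"
  shows "cost_at u 1 C = u c + 2 * (\<kappa> + sum u A)"
proof -
  obtain r ts where C: "C = Node r ts" by (cases C)
  have st: "search_tree E (A \<union> B \<union> {c}) (Node r ts)"
    and cent: "\<forall>s\<in>subtrees (Node r ts). is_centroid E (vset s) u (root s)"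
    using assms(1) C unfolding centroid_tree_def by auto
  have "r = c" using cent vset_search_tree[OF st] centroid_eq_join by auto
  have child: "cost_at u 1 t + sum u (vset t) = \<kappa> + sum u A" if t: "t \<in> set ts" for t
  proof -
    have "vset t \<in> {A, B}" using search_tree_child(2)[OF st t] components_Diff_c \<open>r = c\<close> by simp
    moreover have "centroid_tree (vset t) E u t"
      using search_tree_child(1)[OF st t] cent t unfolding centroid_tree_def by auto
    ultimately show ?thesis
      using assms(2,3) balanced centroid_tree_cong E_Int_A E_Int_B by (metis insert_iff singletonD)
  qed
  have "distinct (map vset ts)" "set (map vset ts) = {A, B}"
    using search_tree_NodeD[OF st] components_Diff_c \<open>r = c\<close> by simp_all
  moreover have "A \<noteq> B" using d1 disjoint by blast
  ultimately have "card (set ts) = 2"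
    by (metis card_2_iff distinct_card distinct_map length_map)
  then show ?thesis
    unfolding C cost_at_Node[OF sym_E st] using child \<open>r = c\<close> pos by simp
qed

end

end

section \<open>The doubling instances\<close>

inductive double_tree :: "('a \<Rightarrow> real) \<Rightarrow> real \<Rightarrow> nat \<Rightarrow> 'a set \<Rightarrow> ('a \<times> 'a) set \<Rightarrow> 'a \<Rightarrow> bool"
  for u :: "'a \<Rightarrow> real" and \<delta> :: real where
  leaf: "u d = 1 \<Longrightarrow> double_tree u \<delta> 0 {d} {} d"
| join: "double_tree u \<delta> k A E1 d1 \<Longrightarrow> double_tree u \<delta> k B E2 d2
    \<Longrightarrow> A \<inter> B = {} \<Longrightarrow> c \<notin> A \<Longrightarrow> c \<notin> B \<Longrightarrow> u c = \<delta>
    \<Longrightarrow> double_tree u \<delta> (Suc k) (A \<union> B \<union> {c}) (join_edges E1 E2 d1 c d2) d1"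

fun double_weight :: "real \<Rightarrow> nat \<Rightarrow> real" where
  "double_weight \<delta> 0 = 1"
| "double_weight \<delta> (Suc k) = 2 * double_weight \<delta> k + \<delta>"

fun double_centroid_cost :: "real \<Rightarrow> nat \<Rightarrow> real" where
  "double_centroid_cost \<delta> 0 = 1"
| "double_centroid_cost \<delta> (Suc k) = double_weight \<delta> (Suc k) + 2 * double_centroid_cost \<delta> k"

fun double_search_cost :: "real \<Rightarrow> nat \<Rightarrow> real" where
  "double_search_cost \<delta> 0 = 1"
| "double_search_cost \<delta> (Suc k) = 2 * double_search_cost \<delta> k + double_weight \<delta> k + 3 * \<delta>"

lemma double_tree_is_tree: "double_tree u \<delta> k S E d \<Longrightarrow> is_tree S E \<and> d \<in> S"
proof (induction rule: double_tree.induct)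
  case (leaf d)
  then show ?case by (simp add: is_tree_def sym_def irrefl_def)
next
  case (join k A E1 d1 B E2 d2 c)
  then interpret tree_join A B E1 E2 d1 c d2 by unfold_locales auto
  show ?case using is_tree_join d1 by blast
qed

lemma tree_join_double_tree:
  assumes "double_tree u \<delta> k A E1 d1" "double_tree u \<delta> k B E2 d2" "A \<inter> B = {}" "c \<notin> A" "c \<notin> B"
  shows "tree_join A B E1 E2 d1 c d2"
  using double_tree_is_tree[OF assms(1)] double_tree_is_tree[OF assms(2)] assms(3-5)
  unfolding tree_join_def by blast

lemma double_tree_weight: "double_tree u \<delta> k S E d \<Longrightarrow> sum u S = double_weight \<delta> k"
proof (induction rule: double_tree.induct)
  case (join k A E1 d1 B E2 d2 c)
  then interpret tree_join A B E1 E2 d1 c d2 by (intro tree_join_double_tree)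
  show ?case using join finite_A finite_B by (simp add: sum.union_disjoint)
qed simp

lemma double_tree_nonneg: "double_tree u \<delta> k S E d \<Longrightarrow> \<delta> \<ge> 0 \<Longrightarrow> \<forall>x\<in>S. u x \<ge> 0"
  by (induction rule: double_tree.induct) auto

lemma double_tree_search_tree:
  "double_tree u \<delta> k S E d
    \<Longrightarrow> \<exists>ts. search_tree E S (Node d ts) \<and> cost_at u 1 (Node d ts) = double_search_cost \<delta> k"
proof (induction rule: double_tree.induct)
  case (leaf d)
  then show ?case using search_tree_leaf by fastforce
next
  case (join k A E1 d1 B E2 d2 c)
  then interpret tree_join A B E1 E2 d1 c d2 by (intro tree_join_double_tree)
  obtain ts1 ts2 where ts: "search_tree E1 A (Node d1 ts1)" "search_tree E2 B (Node d2 ts2)"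
    "cost_at u 1 (Node d1 ts1) = double_search_cost \<delta> k" "cost_at u 1 (Node d2 ts2) = double_search_cost \<delta> k"
    using join.IH by blast
  show ?case
    using search_tree_join[OF ts(1,2)] ts(3,4) double_tree_weight[OF join.hyps(2)] join.hyps(6)
    by (intro exI[of _ "ts1 @ [Node d2 (ts2 @ [Node c []])]"]) (simp del: cost_at.simps)
qed

lemma double_tree_centroid_tree:
  assumes "double_tree u \<delta> k S E d" "\<delta> > 0"
  shows "(\<exists>C. centroid_tree S E u C)
    \<and> (\<forall>C. centroid_tree S E u C \<longrightarrow> cost_at u 1 C = double_centroid_cost \<delta> k)"
  using assms(1)
proof (induction rule: double_tree.induct)
  case (leaf d)
  have "C = Node d []" if "centroid_tree {d} {} u C" for C
  proof (cases C)
    case (Node r ts)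
    then have "search_tree {} {d} (Node r ts)" using that unfolding centroid_tree_def by simp
    from search_tree_NodeD[OF this]
    have "r \<in> {d}" "set (map vset ts) = components {} ({d} - {r})" by blast+
    with Node show ?thesis by simp
  qed
  moreover have "centroid_tree {d} {} u (Node d [])"
    using search_tree_leaf by (simp add: centroid_tree_def is_centroid_def)
  moreover have "cost_at u 1 (Node d []) = double_centroid_cost \<delta> 0" using leaf by simp
  ultimately show ?case by metis
next
  case (join k A E1 d1 B E2 d2 c)
  then interpret tree_join A B E1 E2 d1 c d2 by (intro tree_join_double_tree)
  have u: "\<forall>x\<in>A \<union> B \<union> {c}. u x \<ge> 0" "sum u A = sum u B" "u c > 0"
    using double_tree_nonneg[OF double_tree.join[OF join.hyps]] assms(2) join.hyps(6)
      double_tree_weight[OF join.hyps(1)] double_tree_weight[OF join.hyps(2)] by auto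
  obtain CA CB where "centroid_tree A E1 u CA" "centroid_tree B E2 u CB" using join.IH by blast
  then have "\<exists>C. centroid_tree (A \<union> B \<union> {c}) (join_edges E1 E2 d1 c d2) u C"
    using centroid_tree_join[OF u] by blast
  moreover have "cost_at u 1 C = double_centroid_cost \<delta> (Suc k)"
    if "centroid_tree (A \<union> B \<union> {c}) (join_edges E1 E2 d1 c d2) u C" for C
    using cost_centroid_tree_join[OF u that] join.IH double_tree_weight[OF join.hyps(1)] join.hyps(6)
    by (simp add: algebra_simps)
  ultimately show ?case by (intro conjI allI impI) auto
qed

lemma double_weight_eq: "double_weight \<delta> k = 2 ^ k + \<delta> * (2 ^ k - 1)"
  by (induction k) (auto simp: algebra_simps)

lemma double_weight_pos: "\<delta> \<ge> 0 \<Longrightarrow> double_weight \<delta> k > 0"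
  unfolding double_weight_eq by (smt (verit) mult_nonneg_nonneg one_le_power zero_less_power)

lemma double_cost_gap: "2 * double_search_cost \<delta> k - double_weight \<delta> k - double_centroid_cost \<delta> k = 4 * \<delta> * (2 ^ k - 1)"
  by (induction k) (auto simp: algebra_simps)

lemma double_cost_gap_le:
  assumes "\<delta> \<ge> 0"
  shows "(1 + \<delta>) * (2 * double_search_cost \<delta> k - double_weight \<delta> k - double_centroid_cost \<delta> k)
    \<le> 4 * \<delta> * double_weight \<delta> k"
proof -
  have "(1 + \<delta>) * (2 ^ k - 1) \<le> double_weight \<delta> k" unfolding double_weight_eq by (simp add: algebra_simps)
  then have "4 * \<delta> * ((1 + \<delta>) * (2 ^ k - 1)) \<le> 4 * \<delta> * double_weight \<delta> k"
    using assms by (intro mult_left_mono) auto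
  then show ?thesis unfolding double_cost_gap by (simp add: algebra_simps)
qed

lemma normalized_double_cost_gap:
  assumes "\<delta> \<ge> 0"
  shows "2 * (double_search_cost \<delta> k / double_weight \<delta> k) - 1 - double_centroid_cost \<delta> k / double_weight \<delta> k
    \<le> 4 * \<delta> / (1 + \<delta>)"
proof -
  let ?W = "double_weight \<delta> k"
  have W: "?W > 0" by (rule double_weight_pos[OF assms])
  have "2 * double_search_cost \<delta> k - ?W - double_centroid_cost \<delta> k \<le> 4 * \<delta> * ?W / (1 + \<delta>)"
    using double_cost_gap_le[OF assms, of k] assms by (intro mult_imp_le_div_pos) (simp_all add: mult.commute)
  then have "(2 * double_search_cost \<delta> k - ?W - double_centroid_cost \<delta> k) / ?W \<le> 4 * \<delta> / (1 + \<delta>)"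
    using W by (intro mult_imp_div_pos_le) simp_all
  then show ?thesis using W by (simp add: diff_divide_distrib)
qed

lemma double_centroid_cost_ge: "\<delta> \<ge> 0 \<Longrightarrow> (real k + 1) * 2 ^ k \<le> double_centroid_cost \<delta> k"
proof (induction k)
  case (Suc k)
  have "(1::real) \<le> 2 ^ Suc k" by (rule one_le_power) simp
  then have "2 ^ Suc k \<le> double_weight \<delta> (Suc k)"
    using Suc.prems unfolding double_weight_eq by simp
  with Suc show ?case by (simp add: algebra_simps)
qed simp

lemma double_centroid_cost_ratio_ge:
  assumes "\<delta> \<ge> 0"
  shows "(real k + 1) / (1 + \<delta>) \<le> double_centroid_cost \<delta> k / double_weight \<delta> k"
proof -
  have "double_weight \<delta> k \<le> (1 + \<delta>) * 2 ^ k" using assms unfolding double_weight_eq by (simp add: algebra_simps)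
  then have "(real k + 1) * double_weight \<delta> k \<le> (1 + \<delta>) * ((real k + 1) * 2 ^ k)"
    by (smt (verit) mult.left_commute mult_left_mono of_nat_0_le_iff)
  also have "\<dots> \<le> (1 + \<delta>) * double_centroid_cost \<delta> k"
    using assms double_centroid_cost_ge by (intro mult_left_mono) auto
  finally show ?thesis using assms double_weight_pos[OF assms] by (simp add: field_simps)
qed

context
  fixes u :: "'a \<Rightarrow> real" and \<delta> :: real and k :: nat and S :: "'a set" and E d
  assumes dt: "double_tree u \<delta> k S E d" and pos: "\<delta> > 0"
begin

lemma normalized_double_tree_weight:
  "\<forall>x\<in>S. u x / double_weight \<delta> k \<ge> 0" "sum (\<lambda>x. u x / double_weight \<delta> k) S = 1"
  using double_tree_nonneg[OF dt] double_tree_weight[OF dt] double_weight_pos[of \<delta> k] pos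
  by (auto simp flip: sum_divide_distrib)

lemma normalized_double_tree_centroid_cost:
  "\<exists>C. centroid_tree S E (\<lambda>x. u x / double_weight \<delta> k) C"
  "centroid_tree S E (\<lambda>x. u x / double_weight \<delta> k) C
    \<Longrightarrow> cost (\<lambda>x. u x / double_weight \<delta> k) C = double_centroid_cost \<delta> k / double_weight \<delta> k"
  using double_tree_centroid_tree[OF dt pos] double_weight_pos[of \<delta> k] pos
  by (auto simp: centroid_tree_divide cost_def cost_at_divide)

lemma normalized_double_tree_OPT:
  "(double_centroid_cost \<delta> k / double_weight \<delta> k + 1) / 2 \<le> OPT S E (\<lambda>x. u x / double_weight \<delta> k)"
  "OPT S E (\<lambda>x. u x / double_weight \<delta> k) \<le> double_search_cost \<delta> k / double_weight \<delta> k"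
proof -
  have tree: "is_tree S E" using double_tree_is_tree[OF dt] by blast
  then have "sym E" "connected_in E S" by (simp_all add: is_tree_def connected_in_iff_rtrancl)
  obtain C where "centroid_tree S E (\<lambda>x. u x / double_weight \<delta> k) C" using normalized_double_tree_centroid_cost(1) by blast
  from centroid_tree_cost_le_OPT[OF \<open>sym E\<close> \<open>connected_in E S\<close> normalized_double_tree_weight(1) this]
  show "(double_centroid_cost \<delta> k / double_weight \<delta> k + 1) / 2 \<le> OPT S E (\<lambda>x. u x / double_weight \<delta> k)"
    using normalized_double_tree_centroid_cost(2)[OF \<open>centroid_tree _ _ _ C\<close>] normalized_double_tree_weight(2)
    by simp
  obtain ts where "search_tree E S (Node d ts)" "cost_at u 1 (Node d ts) = double_search_cost \<delta> k"
    using double_tree_search_tree[OF dt] by blast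
  with OPT_le_cost[OF normalized_double_tree_weight(1)]
  show "OPT S E (\<lambda>x. u x / double_weight \<delta> k) \<le> double_search_cost \<delta> k / double_weight \<delta> k"
    by (metis cost_def cost_at_divide)
qed

lemma normalized_double_tree_OPT_ge: "real k / (2 * (1 + \<delta>)) \<le> OPT S E (\<lambda>x. u x / double_weight \<delta> k)"
proof -
  have "real k / (2 * (1 + \<delta>)) \<le> ((real k + 1) / (1 + \<delta>) + 1) / 2"
    using pos by (simp add: field_simps)
  also have "\<dots> \<le> (double_centroid_cost \<delta> k / double_weight \<delta> k + 1) / 2"
    using double_centroid_cost_ratio_ge[of \<delta> k] pos by (intro divide_right_mono add_right_mono) auto
  also have "\<dots> \<le> OPT S E (\<lambda>x. u x / double_weight \<delta> k)" by (rule normalized_double_tree_OPT(1))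
  finally show ?thesis .
qed

end

lemma ratio_bounds:
  fixes x Q :: real
  assumes "x > 0" "(x + 1) / 2 \<le> Q" "Q \<le> (x + 3) / 2"
  shows "2 - 6 / (x + 3) \<le> x / Q" "x / Q \<le> 2 - 2 / (x + 1)"
proof -
  have "x + 1 \<le> 2 * Q" using assms(2) by simp
  then have "Q > 0" using assms(1) by linarith
  have "2 - 6 / (x + 3) = x / ((x + 3) / 2)" "2 - 2 / (x + 1) = x / ((x + 1) / 2)"
    using assms(1) by (simp_all add: field_simps)
  moreover have "x / ((x + 3) / 2) \<le> x / Q" "x / Q \<le> x / ((x + 1) / 2)"
    using assms \<open>Q > 0\<close> by (intro divide_left_mono; simp)+
  ultimately show "2 - 6 / (x + 3) \<le> x / Q" "x / Q \<le> 2 - 2 / (x + 1)" by simp_all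
qed

lemma ratio_tendsto_two:
  fixes x Q :: "nat \<Rightarrow> real"
  assumes x: "filterlim x at_top sequentially"
    and Q: "\<And>n. (x n + 1) / 2 \<le> Q n" "\<And>n. Q n \<le> (x n + 3) / 2"
  shows "(\<lambda>n. x n / Q n) \<longlonglongrightarrow> 2"
proof (rule real_tendsto_sandwich)
  have "filterlim (\<lambda>n. x n + c) at_top sequentially" for c :: real
    using filterlim_tendsto_add_at_top[OF tendsto_const x, of c] by (simp add: add.commute)
  then have "(\<lambda>n. 6 / (x n + 3)) \<longlonglongrightarrow> 0" "(\<lambda>n. 2 / (x n + 1)) \<longlonglongrightarrow> 0"
    by (auto intro: real_tendsto_divide_at_top)
  then show "(\<lambda>n. 2 - 6 / (x n + 3)) \<longlonglongrightarrow> 2" "(\<lambda>n. 2 - 2 / (x n + 1)) \<longlonglongrightarrow> 2"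
    using tendsto_diff[OF tendsto_const] by fastforce+
  have "eventually (\<lambda>n. x n > 0) sequentially" using x by (simp add: filterlim_at_top_dense)
  then show "eventually (\<lambda>n. 2 - 6 / (x n + 3) \<le> x n / Q n) sequentially"
    "eventually (\<lambda>n. x n / Q n \<le> 2 - 2 / (x n + 1)) sequentially"
    using ratio_bounds[OF _ Q] by (auto elim: eventually_mono)
qed

lemma filterlim_at_top_linear_lower:
  fixes f :: "nat \<Rightarrow> real"
  assumes "c > 0" "\<And>n. c * real n \<le> f n"
  shows "filterlim f at_top sequentially"
  by (rule filterlim_at_top_mono[OF filterlim_tendsto_pos_mult_at_top[OF tendsto_const assms(1)
        filterlim_real_sequentially]]) (use assms(2) in auto)

section \<open>Labelling the instances by natural numbers\<close>

text \<open>Level \<open>k\<close> lives on \<open>{0..<2^(k+1) - 1}\<close>; the second copy is shifted by the even number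
  \<open>2^(k+1)\<close> and joined through the odd vertex \<open>2^(k+1) - 1\<close>, so a vertex has weight \<open>\<delta>\<close> exactly when
  its label is odd.\<close>

definition parity_weight :: "real \<Rightarrow> nat \<Rightarrow> real" where
  "parity_weight \<delta> x = (if odd x then \<delta> else 1)"

fun double_vertices :: "nat \<Rightarrow> nat set" where
  "double_vertices 0 = {0}"
| "double_vertices (Suc k) =
    double_vertices k \<union> (\<lambda>x. x + 2 ^ (k + 1)) ` double_vertices k \<union> {2 ^ (k + 1) - 1}"

fun double_edges :: "nat \<Rightarrow> (nat \<times> nat) set" where
  "double_edges 0 = {}"
| "double_edges (Suc k) = join_edges (double_edges k)
    (map_prod (\<lambda>x. x + 2 ^ (k + 1)) (\<lambda>x. x + 2 ^ (k + 1)) ` double_edges k) 0 (2 ^ (k + 1) - 1) (2 ^ (k + 1))"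

lemma double_vertices_less: "x \<in> double_vertices k \<Longrightarrow> x < 2 ^ (k + 1) - 1"
proof (induction k arbitrary: x)
  case (Suc k)
  have e: "(2::nat) ^ (Suc k + 1) = 2 * 2 ^ (k + 1)" and "(2::nat) ^ (k + 1) \<ge> 2"
    by (simp_all add: self_le_power)
  from Suc.prems consider "x \<in> double_vertices k" | y where "y \<in> double_vertices k" "x = y + 2 ^ (k + 1)"
    | "x = 2 ^ (k + 1) - 1" by auto
  then show ?case
  proof cases
    case 1
    then show ?thesis using Suc.IH[of x] \<open>2 ^ (k + 1) \<ge> 2\<close> unfolding e by linarith
  next
    case 2
    then show ?thesis using Suc.IH[of y] \<open>2 ^ (k + 1) \<ge> 2\<close> unfolding e by linarith
  next
    case 3
    then show ?thesis using \<open>2 ^ (k + 1) \<ge> 2\<close> unfolding e by linarith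
  qed
qed simp

lemma double_tree_image:
  assumes "double_tree u \<delta> k S E d" "inj f" "\<And>x. u (f x) = u x"
  shows "double_tree u \<delta> k (f ` S) (map_prod f f ` E) (f d)"
  using assms(1)
proof (induction rule: double_tree.induct)
  case (leaf d)
  then have "u (f d) = 1" using assms(3) by simp
  then show ?case using double_tree.leaf by simp
next
  case (join k A E1 d1 B E2 d2 c)
  have "f ` A \<inter> f ` B = {}" using join.hyps(3) image_Int[OF assms(2), of A B] by simp
  moreover have "f c \<notin> f ` A" "f c \<notin> f ` B"
    using join.hyps(4,5) inj_image_mem_iff[OF assms(2)] by simp_all
  ultimately have "double_tree u \<delta> (Suc k) (f ` A \<union> f ` B \<union> {f c})
      (join_edges (map_prod f f ` E1) (map_prod f f ` E2) (f d1) (f c) (f d2)) (f d1)"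
    using double_tree.join[OF join.IH] join.hyps(6) assms(3) by simp
  then show ?case by (simp add: join_edges_def image_Un)
qed

lemma double_tree_double_vertices:
  "double_tree (parity_weight \<delta>) \<delta> k (double_vertices k) (double_edges k) 0"
proof (induction k)
  case 0
  then show ?case by (simp add: parity_weight_def double_tree.leaf)
next
  case (Suc k)
  define m :: nat where "m = 2 ^ (k + 1)"
  have m: "even m" "m \<ge> 2" unfolding m_def by (simp_all add: self_le_power)
  have "double_tree (parity_weight \<delta>) \<delta> k ((\<lambda>x. x + m) ` double_vertices k)
      (map_prod (\<lambda>x. x + m) (\<lambda>x. x + m) ` double_edges k) (0 + m)"
    using m(1) by (intro double_tree_image[OF Suc]) (simp_all add: parity_weight_def inj_def)
  then have shift: "double_tree (parity_weight \<delta>) \<delta> k ((\<lambda>x. x + m) ` double_vertices k)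
      (map_prod (\<lambda>x. x + m) (\<lambda>x. x + m) ` double_edges k) m" by simp
  have less: "x < m - 1" if "x \<in> double_vertices k" for x
    using double_vertices_less[OF that] unfolding m_def .
  have "double_vertices k \<inter> (\<lambda>x. x + m) ` double_vertices k = {}" "m - 1 \<notin> double_vertices k"
    "m - 1 \<notin> (\<lambda>x. x + m) ` double_vertices k" using less by fastforce+
  moreover have "parity_weight \<delta> (m - 1) = \<delta>" using m by (simp add: parity_weight_def)
  ultimately show ?case using double_tree.join[OF Suc shift] by (simp add: m_def)
qed

lemma centroid_trees_nearly_twice_OPT:
  assumes "(\<epsilon>::real) > 0"
  shows "\<exists>(V :: nat \<Rightarrow> nat set) (E :: nat \<Rightarrow> (nat \<times> nat) set) (w :: nat \<Rightarrow> nat \<Rightarrow> real).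
              (\<forall>n. is_tree (V n) (E n) \<and> (\<forall>x\<in>V n. w n x \<ge> 0) \<and> sum (w n) (V n) = 1)
            \<and> filterlim (\<lambda>n. OPT (V n) (E n) (w n)) at_top sequentially
            \<and> (\<forall>n C. centroid_tree (V n) (E n) (w n) C \<longrightarrow>
                  cost (w n) C \<ge> 2 * OPT (V n) (E n) (w n) - 1 - \<epsilon>)"
proof -
  define \<delta> where "\<delta> = \<epsilon> / 4"
  have \<delta>: "\<delta> > 0" using assms by (simp add: \<delta>_def)
  define w where "w n x = parity_weight \<delta> x / double_weight \<delta> n" for n x
  let ?OPT = "\<lambda>n. OPT (double_vertices n) (double_edges n) (w n)"
  note dt = double_tree_double_vertices[of \<delta>]
  have "is_tree (double_vertices n) (double_edges n) \<and> (\<forall>x\<in>double_vertices n. w n x \<ge> 0)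
      \<and> sum (w n) (double_vertices n) = 1" for n
    using double_tree_is_tree[OF dt] normalized_double_tree_weight[OF dt \<delta>] unfolding w_def by blast
  moreover have "filterlim ?OPT at_top sequentially"
    using normalized_double_tree_OPT_ge[OF dt \<delta>] \<delta> unfolding w_def
    by (intro filterlim_at_top_linear_lower[of "1 / (2 * (1 + \<delta>))"]) simp_all
  moreover have "2 * ?OPT n - 1 - \<epsilon> \<le> cost (w n) C"
    if "centroid_tree (double_vertices n) (double_edges n) (w n) C" for n C
  proof -
    have "4 * \<delta> / (1 + \<delta>) \<le> \<epsilon>" using \<delta> by (simp add: \<delta>_def field_simps)
    then show ?thesis
      using that normalized_double_tree_centroid_cost(2)[OF dt \<delta>] normalized_double_tree_OPT(2)[OF dt \<delta>, of n]
        normalized_double_cost_gap[of \<delta> n] \<delta> unfolding w_def by fastforce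
  qed
  ultimately show ?thesis by blast
qed

lemma centroid_trees_ratio_tendsto_two:
  "\<exists>(V :: nat \<Rightarrow> nat set) (E :: nat \<Rightarrow> (nat \<times> nat) set).
      (\<forall>n. is_tree (V n) (E n))
    \<and> filterlim (\<lambda>n. OPT (V n) (E n) (\<lambda>x. 1 / real (card (V n)))) at_top sequentially
    \<and> (\<forall>C :: nat \<Rightarrow> nat rtree.
         (\<forall>n. centroid_tree (V n) (E n) (\<lambda>x. 1 / real (card (V n))) (C n)) \<longrightarrow>
         (\<lambda>n. cost (\<lambda>x. 1 / real (card (V n))) (C n)
                / OPT (V n) (E n) (\<lambda>x. 1 / real (card (V n)))) \<longlonglongrightarrow> 2)"
proof -
  note dt = double_tree_double_vertices[of 1]
  have one: "(1::real) > 0" by simp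
  have uniform: "(\<lambda>x. 1 / real (card (double_vertices n))) = (\<lambda>x. parity_weight 1 x / double_weight 1 n)" for n
    using double_tree_weight[OF dt, of n] by (simp add: parity_weight_def)
  define x where "x n = double_centroid_cost 1 n / double_weight 1 n" for n
  let ?OPT = "\<lambda>n. OPT (double_vertices n) (double_edges n) (\<lambda>x. 1 / real (card (double_vertices n)))"
  have x_at_top: "filterlim x at_top sequentially"
  proof (rule filterlim_at_top_linear_lower[of "1 / 2"])
    show "1 / 2 * real n \<le> x n" for n
      using double_centroid_cost_ratio_ge[of 1 n] unfolding x_def by (simp add: field_simps)
  qed simp
  have OPT: "(x n + 1) / 2 \<le> ?OPT n" "?OPT n \<le> (x n + 3) / 2" for n
    using normalized_double_tree_OPT[OF dt one, of n] normalized_double_cost_gap[of 1 n]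
    unfolding uniform x_def by simp_all
  have "filterlim ?OPT at_top sequentially"
    using normalized_double_tree_OPT_ge[OF dt one] unfolding uniform
    by (intro filterlim_at_top_linear_lower[of "1 / 4"]) simp_all
  moreover have "(\<lambda>n. cost (\<lambda>x. 1 / real (card (double_vertices n))) (C n) / ?OPT n) \<longlonglongrightarrow> 2"
    if "\<forall>n. centroid_tree (double_vertices n) (double_edges n) (\<lambda>x. 1 / real (card (double_vertices n))) (C n)"
    for C :: "nat \<Rightarrow> nat rtree"
  proof -
    have "cost (\<lambda>x. 1 / real (card (double_vertices n))) (C n) = x n" for n
      using that normalized_double_tree_centroid_cost(2)[OF dt one] unfolding uniform x_def by simp
    then show ?thesis using ratio_tendsto_two[OF x_at_top OPT] by simp
  qed
  ultimately show ?thesis using double_tree_is_tree[OF dt] by blast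
qed

theorem theorem2:
  shows "(\<forall>\<epsilon>::real. \<epsilon> > 0 \<longrightarrow>
           (\<exists>(V :: nat \<Rightarrow> nat set) (E :: nat \<Rightarrow> (nat \<times> nat) set) (w :: nat \<Rightarrow> nat \<Rightarrow> real).
              (\<forall>n. is_tree (V n) (E n) \<and> (\<forall>x\<in>V n. w n x \<ge> 0) \<and> sum (w n) (V n) = 1)
            \<and> filterlim (\<lambda>n. OPT (V n) (E n) (w n)) at_top sequentially
            \<and> (\<forall>n C. centroid_tree (V n) (E n) (w n) C \<longrightarrow>
                  cost (w n) C \<ge> 2 * OPT (V n) (E n) (w n) - 1 - \<epsilon>)))
       \<and> (\<exists>(V :: nat \<Rightarrow> nat set) (E :: nat \<Rightarrow> (nat \<times> nat) set).
              (\<forall>n. is_tree (V n) (E n))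
            \<and> filterlim (\<lambda>n. OPT (V n) (E n) (\<lambda>x. 1 / real (card (V n)))) at_top sequentially
            \<and> (\<forall>C :: nat \<Rightarrow> nat rtree.
                 (\<forall>n. centroid_tree (V n) (E n) (\<lambda>x. 1 / real (card (V n))) (C n)) \<longrightarrow>
                 (\<lambda>n. cost (\<lambda>x. 1 / real (card (V n))) (C n)
                        / OPT (V n) (E n) (\<lambda>x. 1 / real (card (V n)))) \<longlonglongrightarrow> 2))"
  using centroid_trees_nearly_twice_OPT centroid_trees_ratio_tendsto_two by blast

end
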